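(* Let $a>0$ and $0<h\le\frac{1}{3a}$, and let $\alpha_1$ be the smallest positive solution $q$ of $\tan(hq)=\frac{2aq}{q^2-a^2}$. Define, for $z,w\in[0,h]$ and $t>s$, $$P_1(z,t,w,s)=\frac{2e^{-\alpha_1^2(t-s)}[\alpha_1\cos(\alpha_1 z)+a\sin(\alpha_1 z)][\alpha_1\cos(\alpha_1 w)+a\sin(\alpha_1 w)]}{2a+h(a^2+\alpha_1^2)}.$$ Then for all $0\le z,w\le h$ and $t>s$, $$\left|P_1(z,t,w,s)-\frac{\alpha_1^2}{2a}e^{-\alpha_1^2(t-s)}\right|\le\frac52\,h\alpha_1^2e^{-\alpha_1^2(t-s)}.$$ *)

theory Defs
  imports "HOL-Analysis.Analysis"
begin

definition eig_eq :: "real \<Rightarrow> real \<Rightarrow> real \<Rightarrow> bool" where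
  "eig_eq a h q \<longleftrightarrow> tan (h * q) = 2 * a * q / (q\<^sup>2 - a\<^sup>2)"

definition smallest_pos_eig :: "real \<Rightarrow> real \<Rightarrow> real \<Rightarrow> bool" where
  "smallest_pos_eig a h \<alpha> \<longleftrightarrow> \<alpha> > 0 \<and> eig_eq a h \<alpha> \<and> (\<forall>q. 0 < q \<and> eig_eq a h q \<longrightarrow> \<alpha> \<le> q)"

definition P1 :: "real \<Rightarrow> real \<Rightarrow> real \<Rightarrow> real \<Rightarrow> real \<Rightarrow> real \<Rightarrow> real \<Rightarrow> real" where
  "P1 a h \<alpha> z t w s =
     2 * exp (- \<alpha>\<^sup>2 * (t - s)) * (\<alpha> * cos (\<alpha> * z) + a * sin (\<alpha> * z))
       * (\<alpha> * cos (\<alpha> * w) + a * sin (\<alpha> * w)) / (2 * a + h * (a\<^sup>2 + \<alpha>\<^sup>2))"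

end

theory Submission
  imports Defs
begin

(* Write x = h\<alpha>. The eigenvalue equation reads sin x (\<alpha>\<^sup>2 - a\<^sup>2) = 2a\<alpha> cos x; it has a root with
   x < \<pi>/2, so the smallest one satisfies x < \<pi>/2 too. There x cos x \<le> sin x \<le> x and
   cos x \<ge> 1 - x\<^sup>2/2 pin h(\<alpha>\<^sup>2 - a\<^sup>2) between 2a(1 - x\<^sup>2/2) and 2a. On [0,h] the eigenfunction
   \<alpha> cos(\<alpha>v) + a sin(\<alpha>v) lies between \<alpha>(1 - x\<^sup>2/2) and sqrt(\<alpha>\<^sup>2 + a\<^sup>2), so after multiplying
   by h both bounds on P1 become rational inequalities in b = ah and y = x\<^sup>2. *)

lemma x_cos_le_sin:
  fixes x :: real
  assumes "0 \<le> x" and "x \<le> pi"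
  shows "x * cos x \<le> sin x"
proof -
  let ?f = "\<lambda>x. sin x - x * cos x"
  have "?f 0 \<le> ?f x"
  proof (rule DERIV_nonneg_imp_nondecreasing [OF assms(1)])
    fix u assume u: "0 \<le> u" "u \<le> x"
    have "(?f has_real_derivative u * sin u) (at u)"
      by (auto intro!: derivative_eq_intros simp: field_simps)
    moreover have "0 \<le> u * sin u"
      using assms u by (simp add: sin_ge_zero)
    ultimately show "\<exists>y. (?f has_real_derivative y) (at u) \<and> 0 \<le> y"
      by blast
  qed
  then show ?thesis
    by simp
qed

lemma one_minus_sq_div_2_le_cos:
  fixes x :: real
  shows "1 - x\<^sup>2 / 2 \<le> cos x"
proof -
  have "cos x = 1 - 2 * (sin (x / 2))\<^sup>2"
    using cos_double_sin [of "x / 2"] by simp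
  moreover have "(sin (x / 2))\<^sup>2 \<le> (x / 2)\<^sup>2"
    using abs_sin_x_le_abs_x [of "x / 2"] by (metis abs_le_square_iff)
  ultimately show ?thesis
    by (simp add: power_divide)
qed

lemma eig_eq_root_below_pi_half:
  fixes a h :: real
  assumes "0 < a" and "0 < h" and "a * h < pi / 2"
  shows "\<exists>q > 0. h * q < pi / 2 \<and> eig_eq a h q"
proof -
  define b where "b = a * h"
  define g where "g x = sin x * (x\<^sup>2 - b\<^sup>2) - 2 * b * x * cos x" for x
  have b: "0 < b" "b < pi / 2"
    using assms by (auto simp: b_def)
  have "g b < 0"
    using b by (simp add: g_def cos_gt_zero)
  moreover have "0 < g (pi / 2)"
    using b by (simp add: g_def power_strict_mono)
  moreover have "continuous_on {b..pi / 2} g"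
    unfolding g_def by (intro continuous_intros)
  ultimately obtain x where x: "b \<le> x" "x \<le> pi / 2" "g x = 0"
    using IVT' [of g b 0 "pi / 2"] b by auto
  with \<open>g b < 0\<close> \<open>0 < g (pi / 2)\<close> have "x \<noteq> b" "x \<noteq> pi / 2"
    by (metis less_irrefl)+
  with x have "b < x" "x < pi / 2"
    by auto
  have "0 < cos x"
    using b \<open>b < x\<close> \<open>x < pi / 2\<close> by (intro cos_gt_zero) auto
  have "0 < x\<^sup>2 - b\<^sup>2"
    using b \<open>b < x\<close> by (simp add: power_strict_mono)
  have "sin x * (x\<^sup>2 - b\<^sup>2) = 2 * b * x * cos x"
    using x(3) by (simp add: g_def)
  with \<open>0 < cos x\<close> \<open>0 < x\<^sup>2 - b\<^sup>2\<close> have "tan x = 2 * b * x / (x\<^sup>2 - b\<^sup>2)"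
    by (simp add: tan_def field_simps)
  moreover have "2 * a * (x / h) / ((x / h)\<^sup>2 - a\<^sup>2) = 2 * b * x / (x\<^sup>2 - b\<^sup>2)"
    using assms \<open>0 < x\<^sup>2 - b\<^sup>2\<close> by (simp add: b_def field_simps power2_eq_square)
  ultimately have "eig_eq a h (x / h)"
    using assms(2) by (simp add: eig_eq_def)
  then show ?thesis
    using assms(2) b \<open>b < x\<close> \<open>x < pi / 2\<close> by (intro exI [of _ "x / h"]) auto
qed

lemma smallest_pos_eig_below_pi_half:
  fixes a h \<alpha> :: real
  assumes "0 < a" and "0 < h" and "a * h < pi / 2" and "smallest_pos_eig a h \<alpha>"
  shows "h * \<alpha> < pi / 2"
proof -
  obtain q where "0 < q" "h * q < pi / 2" "eig_eq a h q"
    using eig_eq_root_below_pi_half [OF assms(1-3)] by blast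
  with assms(4) have "\<alpha> \<le> q"
    by (simp add: smallest_pos_eig_def)
  with assms(2) have "h * \<alpha> \<le> h * q"
    by (simp add: mult_left_mono)
  with \<open>h * q < pi / 2\<close> show ?thesis
    by linarith
qed

lemma eig_eq_bounds:
  fixes a h \<alpha> :: real
  assumes "0 < a" and "0 < \<alpha>" and "0 < h" and "h * \<alpha> < pi / 2" and "eig_eq a h \<alpha>"
  shows "2 * a * (1 - (h * \<alpha>)\<^sup>2 / 2) \<le> h * (\<alpha>\<^sup>2 - a\<^sup>2)"
    and "h * (\<alpha>\<^sup>2 - a\<^sup>2) \<le> 2 * a"
proof -
  define x where "x = h * \<alpha>"
  have x: "0 < x" "x < pi / 2"
    using assms(2-4) by (simp_all add: x_def)
  then have "0 < cos x" "0 < tan x"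
    by (simp_all add: cos_gt_zero tan_gt_zero)
  have tan_x: "tan x = 2 * a * \<alpha> / (\<alpha>\<^sup>2 - a\<^sup>2)"
    using assms(5) by (simp add: eig_eq_def x_def)
  moreover have "0 < 2 * a * \<alpha>"
    using assms(1,2) by simp
  ultimately have "0 < \<alpha>\<^sup>2 - a\<^sup>2"
    using \<open>0 < tan x\<close> by (simp add: zero_less_divide_iff)
  with tan_x \<open>0 < cos x\<close> have sin_cos: "sin x * (\<alpha>\<^sup>2 - a\<^sup>2) = 2 * a * \<alpha> * cos x"
    by (simp add: tan_def field_simps)
  have "(h * (\<alpha>\<^sup>2 - a\<^sup>2)) * (\<alpha> * cos x) = x * cos x * (\<alpha>\<^sup>2 - a\<^sup>2)"
    by (simp add: x_def algebra_simps)
  also have "\<dots> \<le> sin x * (\<alpha>\<^sup>2 - a\<^sup>2)"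
    using x \<open>0 < \<alpha>\<^sup>2 - a\<^sup>2\<close> by (intro mult_right_mono x_cos_le_sin) auto
  also have "\<dots> = (2 * a) * (\<alpha> * cos x)"
    using sin_cos by simp
  finally show "h * (\<alpha>\<^sup>2 - a\<^sup>2) \<le> 2 * a"
    using assms(2) \<open>0 < cos x\<close> by simp
  have "(2 * a * (1 - x\<^sup>2 / 2)) * \<alpha> \<le> 2 * a * \<alpha> * cos x"
    using assms(1,2) one_minus_sq_div_2_le_cos [of x] by (simp add: mult.commute mult.left_commute)
  also have "\<dots> = sin x * (\<alpha>\<^sup>2 - a\<^sup>2)"
    using sin_cos by simp
  also have "\<dots> \<le> x * (\<alpha>\<^sup>2 - a\<^sup>2)"
    using x \<open>0 < \<alpha>\<^sup>2 - a\<^sup>2\<close> by (intro mult_right_mono sin_x_le_x) auto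
  also have "\<dots> = (h * (\<alpha>\<^sup>2 - a\<^sup>2)) * \<alpha>"
    by (simp add: x_def algebra_simps)
  finally show "2 * a * (1 - (h * \<alpha>)\<^sup>2 / 2) \<le> h * (\<alpha>\<^sup>2 - a\<^sup>2)"
    using assms(2) by (simp add: x_def)
qed

definition eigfun :: "real \<Rightarrow> real \<Rightarrow> real \<Rightarrow> real" where
  "eigfun a \<alpha> v = \<alpha> * cos (\<alpha> * v) + a * sin (\<alpha> * v)"

lemma eigfun_sq_le: "(eigfun a \<alpha> v)\<^sup>2 \<le> \<alpha>\<^sup>2 + a\<^sup>2"
proof -
  have lagrange: "(\<alpha> * c + a * s)\<^sup>2 + (\<alpha> * s - a * c)\<^sup>2 = (\<alpha>\<^sup>2 + a\<^sup>2) * (s\<^sup>2 + c\<^sup>2)" for s c :: real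
    by (simp add: power2_eq_square algebra_simps)
  have "(eigfun a \<alpha> v)\<^sup>2 + (\<alpha> * sin (\<alpha> * v) - a * cos (\<alpha> * v))\<^sup>2 = \<alpha>\<^sup>2 + a\<^sup>2"
    unfolding eigfun_def lagrange by simp
  then show ?thesis
    using zero_le_power2 [of "\<alpha> * sin (\<alpha> * v) - a * cos (\<alpha> * v)"] by linarith
qed

lemma eigfun_mult_le: "eigfun a \<alpha> z * eigfun a \<alpha> w \<le> \<alpha>\<^sup>2 + a\<^sup>2"
proof -
  have "2 * (eigfun a \<alpha> z * eigfun a \<alpha> w) \<le> (eigfun a \<alpha> z)\<^sup>2 + (eigfun a \<alpha> w)\<^sup>2"
    using zero_le_power2 [of "eigfun a \<alpha> z - eigfun a \<alpha> w"]
    by (simp add: power2_eq_square algebra_simps)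
  then show ?thesis
    using eigfun_sq_le [of a \<alpha> z] eigfun_sq_le [of a \<alpha> w] by linarith
qed

lemma eigfun_ge:
  fixes a \<alpha> h v :: real
  assumes "0 \<le> a" and "0 \<le> \<alpha>" and "0 \<le> v" and "v \<le> h" and "h * \<alpha> \<le> pi"
  shows "\<alpha> * (1 - (h * \<alpha>)\<^sup>2 / 2) \<le> eigfun a \<alpha> v"
proof -
  have "0 \<le> \<alpha> * v" "\<alpha> * v \<le> h * \<alpha>"
    using assms by (simp_all add: mult_left_mono mult.commute)
  then have "1 - (h * \<alpha>)\<^sup>2 / 2 \<le> cos (\<alpha> * v)"
    using one_minus_sq_div_2_le_cos [of "\<alpha> * v"] power_mono [of "\<alpha> * v" "h * \<alpha>" 2] by linarith
  moreover have "0 \<le> sin (\<alpha> * v)"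
    using \<open>0 \<le> \<alpha> * v\<close> \<open>\<alpha> * v \<le> h * \<alpha>\<close> assms(5) by (intro sin_ge_zero) auto
  ultimately show ?thesis
    using assms(1,2) by (simp add: eigfun_def add_increasing2 mult_left_mono)
qed

lemma eigfun_mult_ge:
  fixes a \<alpha> h z w :: real
  assumes "0 \<le> a" and "0 \<le> \<alpha>" and "0 \<le> z" and "z \<le> h" and "0 \<le> w" and "w \<le> h"
    and "(h * \<alpha>)\<^sup>2 \<le> 2"
  shows "(\<alpha> * (1 - (h * \<alpha>)\<^sup>2 / 2))\<^sup>2 \<le> eigfun a \<alpha> z * eigfun a \<alpha> w"
proof -
  have "(h * \<alpha>)\<^sup>2 \<le> 2\<^sup>2"
    using assms(7) by simp
  then have "h * \<alpha> \<le> 2"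
    by (rule power2_le_imp_le) simp
  then have "h * \<alpha> \<le> pi"
    using pi_gt3 by linarith
  then have "\<alpha> * (1 - (h * \<alpha>)\<^sup>2 / 2) \<le> eigfun a \<alpha> z"
    and "\<alpha> * (1 - (h * \<alpha>)\<^sup>2 / 2) \<le> eigfun a \<alpha> w"
    using assms(1-6) by (simp_all add: eigfun_ge)
  moreover have "0 \<le> \<alpha> * (1 - (h * \<alpha>)\<^sup>2 / 2)"
    using assms(2,7) by simp
  ultimately show ?thesis
    unfolding power2_eq_square by (meson mult_mono order.trans)
qed

lemma upper_ratio_bound:
  fixes b y :: real
  assumes "0 < b" and "2 * b + b\<^sup>2 \<le> y * (1 + b)" and "y \<le> 2 * b + b\<^sup>2"
  shows "2 * (y + b\<^sup>2) / (2 * b + b\<^sup>2 + y) \<le> y / (2 * b) + 5 / 2 * y"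
proof -
  \<comment> \<open>Both sides increase with y: compare them at y = 2b + b^2 and at y = y_min.\<close>
  define y_min where "y_min = (2 * b + b\<^sup>2) / (1 + b)"
  have "y_min \<le> y"
    using assms(1,2) by (simp add: y_min_def divide_le_eq mult.commute)
  have "0 < y_min"
    using assms(1) by (simp add: y_min_def add_pos_nonneg)
  have "2 * (y + b\<^sup>2) / (2 * b + b\<^sup>2 + y) \<le> (2 + 2 * b) / (2 + b)"
    using assms \<open>0 < y_min\<close> \<open>y_min \<le> y\<close> by (simp add: field_simps power2_eq_square)
  also have "\<dots> \<le> y_min * (1 / (2 * b) + 5 / 2)"
  proof -
    have "y_min * (1 / (2 * b) + 5 / 2) - (2 + 2 * b) / (2 + b)
          = (16 * b + 17 * b\<^sup>2 + 5 * b ^ 3) / (2 * (1 + b) * (2 + b))"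
      using assms(1) by (simp add: y_min_def divide_simps)
        (simp add: algebra_simps power2_eq_square power3_eq_cube)
    moreover have "0 \<le> (16 * b + 17 * b\<^sup>2 + 5 * b ^ 3) / (2 * (1 + b) * (2 + b))"
      using assms(1) by simp
    ultimately show ?thesis by linarith
  qed
  also have "\<dots> \<le> y * (1 / (2 * b) + 5 / 2)"
    using assms(1) \<open>y_min \<le> y\<close> by (intro mult_right_mono) auto
  finally show ?thesis
    by (simp add: algebra_simps)
qed

lemma lower_ratio_bound:
  fixes b y :: real
  assumes "0 < b" and "0 \<le> y" and "y \<le> 2 * b + b\<^sup>2"
  shows "1 / (2 * b) - 5 / 2 \<le> 2 * (1 - y / 2)\<^sup>2 / (2 * b + b\<^sup>2 + y)"
proof -
  \<comment> \<open>Use (1 - y/2)^2 \<ge> 1 - y; then 2(1 - y)/(c + y) decreases in y, so take y = c.\<close>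
  define c where "c = 2 * b + b\<^sup>2"
  have "0 < c"
    using assms(1) by (simp add: c_def add_pos_nonneg)
  have "1 / (2 * b) - 5 / 2 \<le> 2 * (1 - c) / (c + c)"
  proof -
    have "2 * (1 - c) / (c + c) - (1 / (2 * b) - 5 / 2) = (5 * b\<^sup>2 + 3 * b ^ 3) / (2 * b * c)"
      using assms(1) \<open>0 < c\<close> by (simp add: c_def divide_simps)
        (simp add: algebra_simps power2_eq_square power3_eq_cube)
    moreover have "0 \<le> (5 * b\<^sup>2 + 3 * b ^ 3) / (2 * b * c)"
      using assms(1) \<open>0 < c\<close> by simp
    ultimately show ?thesis by linarith
  qed
  also have "\<dots> \<le> 2 * (1 - y) / (c + y)"
  proof -
    have "0 \<le> (c - y) * (1 + c)"
      using assms(3) \<open>0 < c\<close> by (simp add: c_def)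
    then show ?thesis
      using assms(2) \<open>0 < c\<close> by (simp add: field_simps algebra_simps)
  qed
  also have "\<dots> \<le> 2 * (1 - y / 2)\<^sup>2 / (c + y)"
    using assms(2) \<open>0 < c\<close> by (intro divide_right_mono) (auto simp: power2_eq_square algebra_simps)
  finally show ?thesis
    by (simp add: c_def)
qed

lemma normalised_upper_bound:
  fixes a h \<alpha> :: real
  assumes "0 < a" and "0 < h"
    and "2 * a * (1 - (h * \<alpha>)\<^sup>2 / 2) \<le> h * (\<alpha>\<^sup>2 - a\<^sup>2)" and "h * (\<alpha>\<^sup>2 - a\<^sup>2) \<le> 2 * a"
  shows "2 * (\<alpha>\<^sup>2 + a\<^sup>2) / (2 * a + h * (a\<^sup>2 + \<alpha>\<^sup>2)) \<le> \<alpha>\<^sup>2 / (2 * a) + 5 / 2 * h * \<alpha>\<^sup>2"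
proof -
  define b y D where "b = a * h" and "y = (h * \<alpha>)\<^sup>2" and "D = 2 * a + h * (a\<^sup>2 + \<alpha>\<^sup>2)"
  have "0 < D"
    using assms(1,2) by (simp add: D_def add_pos_nonneg)
  have hD: "h * D = 2 * b + b\<^sup>2 + y"
    by (simp add: D_def b_def y_def power2_eq_square algebra_simps)
  have "2 * b + b\<^sup>2 \<le> y * (1 + b)"
    using mult_left_mono [OF assms(3), of h] assms(2)
    by (simp add: b_def y_def power2_eq_square algebra_simps)
  moreover have "y \<le> 2 * b + b\<^sup>2"
    using mult_left_mono [OF assms(4), of h] assms(2)
    by (simp add: b_def y_def power2_eq_square algebra_simps)
  ultimately have "2 * (y + b\<^sup>2) / (h * D) \<le> y / (2 * b) + 5 / 2 * y"
    unfolding hD using assms(1,2) by (intro upper_ratio_bound) (simp_all add: b_def)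
  then have "2 * (y + b\<^sup>2) / (h * D) / h \<le> (y / (2 * b) + 5 / 2 * y) / h"
    using assms(2) by (intro divide_right_mono) auto
  moreover have "2 * (y + b\<^sup>2) / (h * D) / h = 2 * (\<alpha>\<^sup>2 + a\<^sup>2) / D"
    using assms(2) \<open>0 < D\<close> by (simp add: b_def y_def field_simps power2_eq_square)
  moreover have "(y / (2 * b) + 5 / 2 * y) / h = \<alpha>\<^sup>2 / (2 * a) + 5 / 2 * h * \<alpha>\<^sup>2"
    using assms(1,2) by (simp add: b_def y_def field_simps power2_eq_square)
  ultimately show ?thesis
    by (simp add: D_def)
qed

lemma normalised_lower_bound:
  fixes a h \<alpha> :: real
  assumes "0 < a" and "0 < h" and "h * (\<alpha>\<^sup>2 - a\<^sup>2) \<le> 2 * a"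
  shows "\<alpha>\<^sup>2 / (2 * a) - 5 / 2 * h * \<alpha>\<^sup>2
         \<le> 2 * (\<alpha> * (1 - (h * \<alpha>)\<^sup>2 / 2))\<^sup>2 / (2 * a + h * (a\<^sup>2 + \<alpha>\<^sup>2))"
proof -
  define b y D where "b = a * h" and "y = (h * \<alpha>)\<^sup>2" and "D = 2 * a + h * (a\<^sup>2 + \<alpha>\<^sup>2)"
  have "0 < D"
    using assms(1,2) by (simp add: D_def add_pos_nonneg)
  have hD: "h * D = 2 * b + b\<^sup>2 + y"
    by (simp add: D_def b_def y_def power2_eq_square algebra_simps)
  have "y \<le> 2 * b + b\<^sup>2"
    using mult_left_mono [OF assms(3), of h] assms(2)
    by (simp add: b_def y_def power2_eq_square algebra_simps)
  then have "1 / (2 * b) - 5 / 2 \<le> 2 * (1 - y / 2)\<^sup>2 / (h * D)"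
    unfolding hD using assms(1,2) by (intro lower_ratio_bound) (simp_all add: b_def y_def)
  then have "y * (1 / (2 * b) - 5 / 2) / h \<le> y * (2 * (1 - y / 2)\<^sup>2 / (h * D)) / h"
    using assms(2) by (intro divide_right_mono mult_left_mono) (auto simp: y_def)
  moreover have "y * (1 / (2 * b) - 5 / 2) / h = \<alpha>\<^sup>2 / (2 * a) - 5 / 2 * h * \<alpha>\<^sup>2"
    using assms(1,2) by (simp add: b_def y_def field_simps power2_eq_square)
  moreover have "y * (2 * u\<^sup>2 / (h * D)) / h = 2 * (\<alpha> * u)\<^sup>2 / D" for u
    using assms(2) \<open>0 < D\<close> by (simp add: y_def field_simps power2_eq_square)
  ultimately show ?thesis
    by (simp add: D_def y_def)
qed

lemma smallest_pos_eig_estimates: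
  fixes a h \<alpha> :: real
  assumes "0 < a" and "0 < h" and "a * h \<le> 1 / 3" and "smallest_pos_eig a h \<alpha>"
  shows "0 < \<alpha>"
    and "2 * a * (1 - (h * \<alpha>)\<^sup>2 / 2) \<le> h * (\<alpha>\<^sup>2 - a\<^sup>2)"
    and "h * (\<alpha>\<^sup>2 - a\<^sup>2) \<le> 2 * a"
    and "(h * \<alpha>)\<^sup>2 \<le> 2"
proof -
  show "0 < \<alpha>"
    using assms(4) by (simp add: smallest_pos_eig_def)
  have "a * h < pi / 2"
    using assms(3) pi_gt3 by linarith
  then have "h * \<alpha> < pi / 2"
    by (rule smallest_pos_eig_below_pi_half [OF assms(1,2) _ assms(4)])
  moreover have "eig_eq a h \<alpha>"
    using assms(4) by (simp add: smallest_pos_eig_def)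
  ultimately show "2 * a * (1 - (h * \<alpha>)\<^sup>2 / 2) \<le> h * (\<alpha>\<^sup>2 - a\<^sup>2)"
    and upper: "h * (\<alpha>\<^sup>2 - a\<^sup>2) \<le> 2 * a"
    using eig_eq_bounds [OF assms(1) \<open>0 < \<alpha>\<close> assms(2)] by blast+
  have "h * (h * (\<alpha>\<^sup>2 - a\<^sup>2)) \<le> 2 * (a * h)"
    using mult_left_mono [OF upper, of h] assms(2) by (simp add: algebra_simps)
  moreover have "(a * h)\<^sup>2 \<le> (1 / 3)\<^sup>2"
    using assms by (intro power_mono) simp_all
  moreover have "(h * \<alpha>)\<^sup>2 = h * (h * (\<alpha>\<^sup>2 - a\<^sup>2)) + (a * h)\<^sup>2"
    by (simp add: power2_eq_square algebra_simps)
  ultimately show "(h * \<alpha>)\<^sup>2 \<le> 2"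
    using assms(3) by (simp add: power2_eq_square)
qed

lemma eigfun_mult_ratio_bound:
  fixes a h \<alpha> z w :: real
  assumes "0 < a" and "0 < h" and "0 < \<alpha>"
    and "2 * a * (1 - (h * \<alpha>)\<^sup>2 / 2) \<le> h * (\<alpha>\<^sup>2 - a\<^sup>2)" and "h * (\<alpha>\<^sup>2 - a\<^sup>2) \<le> 2 * a"
    and "(h * \<alpha>)\<^sup>2 \<le> 2"
    and "0 \<le> z" and "z \<le> h" and "0 \<le> w" and "w \<le> h"
  shows "\<bar>2 * (eigfun a \<alpha> z * eigfun a \<alpha> w) / (2 * a + h * (a\<^sup>2 + \<alpha>\<^sup>2)) - \<alpha>\<^sup>2 / (2 * a)\<bar>
         \<le> 5 / 2 * h * \<alpha>\<^sup>2"
proof -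
  define D where "D = 2 * a + h * (a\<^sup>2 + \<alpha>\<^sup>2)"
  define R where "R = 2 * (eigfun a \<alpha> z * eigfun a \<alpha> w) / D"
  have "0 < D"
    using assms(1,2) by (simp add: D_def add_pos_nonneg)
  have "R \<le> 2 * (\<alpha>\<^sup>2 + a\<^sup>2) / D"
    unfolding R_def using \<open>0 < D\<close> eigfun_mult_le [of a \<alpha> z w] by (intro divide_right_mono) auto
  also have "\<dots> \<le> \<alpha>\<^sup>2 / (2 * a) + 5 / 2 * h * \<alpha>\<^sup>2"
    unfolding D_def using assms(1,2,4,5) by (rule normalised_upper_bound)
  finally have "R \<le> \<alpha>\<^sup>2 / (2 * a) + 5 / 2 * h * \<alpha>\<^sup>2" .
  have "\<alpha>\<^sup>2 / (2 * a) - 5 / 2 * h * \<alpha>\<^sup>2 \<le> 2 * (\<alpha> * (1 - (h * \<alpha>)\<^sup>2 / 2))\<^sup>2 / D"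
    unfolding D_def using assms(1,2,5) by (rule normalised_lower_bound)
  also have "\<dots> \<le> R"
    unfolding R_def using assms(1,3,6-10) \<open>0 < D\<close>
    by (intro divide_right_mono mult_left_mono eigfun_mult_ge) auto
  finally show ?thesis
    using \<open>R \<le> \<alpha>\<^sup>2 / (2 * a) + 5 / 2 * h * \<alpha>\<^sup>2\<close> unfolding R_def D_def abs_le_iff by linarith
qed

lemma P1_eq_exp_mult:
  "P1 a h \<alpha> z t w s = exp (- \<alpha>\<^sup>2 * (t - s))
     * (2 * (eigfun a \<alpha> z * eigfun a \<alpha> w) / (2 * a + h * (a\<^sup>2 + \<alpha>\<^sup>2)))"
  by (simp add: P1_def eigfun_def)

theorem lemma3p4:
  fixes a h \<alpha> z w t s :: real
  assumes "a > 0" and "0 < h" and "h \<le> 1 / (3 * a)"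
    and "smallest_pos_eig a h \<alpha>"
    and "0 \<le> z" and "z \<le> h" and "0 \<le> w" and "w \<le> h" and "t > s"
  shows "\<bar>P1 a h \<alpha> z t w s - \<alpha>\<^sup>2 / (2 * a) * exp (- \<alpha>\<^sup>2 * (t - s))\<bar>
           \<le> 5 / 2 * h * \<alpha>\<^sup>2 * exp (- \<alpha>\<^sup>2 * (t - s))"
proof -
  define R where "R = 2 * (eigfun a \<alpha> z * eigfun a \<alpha> w) / (2 * a + h * (a\<^sup>2 + \<alpha>\<^sup>2))"
  have "a * h \<le> 1 / 3"
    using assms(1,3) by (simp add: field_simps)
  note estimates = smallest_pos_eig_estimates [OF assms(1,2) this assms(4)]
  have "\<bar>R - \<alpha>\<^sup>2 / (2 * a)\<bar> \<le> 5 / 2 * h * \<alpha>\<^sup>2"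
    unfolding R_def by (rule eigfun_mult_ratio_bound [OF assms(1,2) estimates assms(5-8)])
  moreover have "P1 a h \<alpha> z t w s - \<alpha>\<^sup>2 / (2 * a) * exp (- \<alpha>\<^sup>2 * (t - s))
      = exp (- \<alpha>\<^sup>2 * (t - s)) * (R - \<alpha>\<^sup>2 / (2 * a))"
    unfolding P1_eq_exp_mult R_def by (simp add: algebra_simps)
  ultimately show ?thesis
    by (simp add: abs_mult)
qed

end
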